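(* Let $\mathcal{H}$ be a hypergraph on a finite vertex set $V$ and let $p\in[0,1]$. For every $\gamma\in(0,1/10]$, writing $\mu=\mu_p(\mathcal{H})$ and $\Delta=\Delta_p(\mathcal{H})$, \[ \Pr\big(\nu(\mathcal{H}[V_p])\le\gamma^2\mu\big)\le\exp\big(-(1-\gamma)\mu+2\Delta\big). \]
   Context: $V_p$ denotes the random subset of $V$ containing each element independently with probability $p$. For $W\subseteq V$, $\mathcal{H}[W]=\{A\in\mathcal{H}: A\subseteq W\}$. $\nu(\cdot)$ is the matching number. $\mu_p(\mathcal{H})=\sum_{A\in\mathcal{H}}p^{|A|}$ and $\Delta_p(\mathcal{H})=\sum p^{|A\cup B|}$, the sum over unordered pairs $\{A,B\}$ of distinct edges of $\mathcal{H}$ with $A\cap B\neq\emptyset$. *)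

theory Defs
  imports Complex_Main
begin

definition hypergraph_on :: "'a set \<Rightarrow> 'a set set \<Rightarrow> bool" where
  "hypergraph_on V H \<longleftrightarrow> finite V \<and> (\<forall>A\<in>H. A \<subseteq> V \<and> A \<noteq> {})"

definition induced :: "'a set set \<Rightarrow> 'a set \<Rightarrow> 'a set set" where
  "induced H W = {A \<in> H. A \<subseteq> W}"

definition is_matching :: "'a set set \<Rightarrow> 'a set set \<Rightarrow> bool" where
  "is_matching H M \<longleftrightarrow> M \<subseteq> H \<and> (\<forall>A\<in>M. \<forall>B\<in>M. A \<noteq> B \<longrightarrow> A \<inter> B = {})"

definition matching_number :: "'a set set \<Rightarrow> nat" where
  "matching_number H = Max {card M | M. is_matching H M}"

definition mu_p :: "real \<Rightarrow> 'a set set \<Rightarrow> real" where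
  "mu_p p H = (\<Sum>A\<in>H. p ^ card A)"

definition Delta_p :: "real \<Rightarrow> 'a set set \<Rightarrow> real" where
  "Delta_p p H = (\<Sum>P\<in>{P. P \<subseteq> H \<and> card P = 2 \<and> \<Inter>P \<noteq> {}}. p ^ card (\<Union>P))"

definition prob_random_subset :: "'a set \<Rightarrow> real \<Rightarrow> ('a set \<Rightarrow> bool) \<Rightarrow> real" where
  "prob_random_subset V p Q =
     (\<Sum>W\<in>{W. W \<subseteq> V \<and> Q W}. p ^ card W * (1 - p) ^ card (V - W))"

end

theory Submission
  imports Defs
begin

(* Write nu(W) for the matching number of H[W] and Psi(s) = E exp(-s nu(V_p)).
   The isolated edges of H[W] form a matching, so -Psi'(s) = E[nu exp(-s nu)] is at least the sum
   over the edges A of E[A isolated; exp(-s nu)]. Deleting A from a maximum matching loses only one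
   edge, and Harris' inequality for the two decreasing functions "no neighbour of A is completed
   outside A" and exp(-s nu) of the edges disjoint from A bounds each summand from below by
   exp(-s) (p^|A| - sum_{B ~ A} p^|A u B|) Psi(s). The differential inequality
   -Psi' >= (mu - 2 Delta) exp(-s) Psi integrates to Psi(t) <= exp(-(mu - 2 Delta)(1 - exp(-t))),
   and Markov's inequality at exp(-t) = gamma^2, together with 2 gamma ln(1/gamma) <= 1 - gamma,
   gives the bound. *)

definition expect_Vp :: "real \<Rightarrow> 'a set \<Rightarrow> ('a set \<Rightarrow> real) \<Rightarrow> real" where
  "expect_Vp p V F = (\<Sum>W\<in>Pow V. p ^ card W * (1 - p) ^ card (V - W) * F W)"

lemma prob_random_subset_eq_expect_Vp:
  assumes "finite V"
  shows "prob_random_subset V p Q = expect_Vp p V (\<lambda>W. if Q W then 1 else 0)"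
proof -
  have "{W. W \<subseteq> V \<and> Q W} = {W \<in> Pow V. Q W}" by auto
  then show ?thesis
    unfolding prob_random_subset_def expect_Vp_def
    using assms
    by (simp add: sum.inter_filter[symmetric] if_distrib[of "\<lambda>x. _ * x"] cong: if_cong)
qed

lemma expect_Vp_empty [simp]: "expect_Vp p {} F = F {}"
  by (simp add: expect_Vp_def)

lemma expect_Vp_insert:
  assumes "finite U" "x \<notin> U"
  shows "expect_Vp p (insert x U) F
           = p * expect_Vp p U (\<lambda>W. F (insert x W)) + (1 - p) * expect_Vp p U F"
proof -
  define w where "w W = p ^ card W * (1 - p) ^ card (insert x U - W) * F W" for W
  have inj: "inj_on (insert x) (Pow U)"
    using assms(2) unfolding inj_on_def by (metis Diff_insert_absorb PowD subsetD)
  have "expect_Vp p (insert x U) F = sum w (Pow U) + sum w (insert x ` Pow U)"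
    unfolding expect_Vp_def Pow_insert w_def
    using assms by (intro sum.union_disjoint) auto
  also have "sum w (Pow U) = (1 - p) * expect_Vp p U F"
    unfolding expect_Vp_def sum_distrib_left
  proof (rule sum.cong)
    fix W assume "W \<in> Pow U"
    then have "insert x U - W = insert x (U - W)" "x \<notin> U - W"
      using assms(2) by auto
    then have "card (insert x U - W) = Suc (card (U - W))"
      using assms(1) by simp
    then show "w W = (1 - p) * (p ^ card W * (1 - p) ^ card (U - W) * F W)"
      by (simp add: w_def)
  qed simp
  also have "sum w (insert x ` Pow U) = p * expect_Vp p U (\<lambda>W. F (insert x W))"
    unfolding expect_Vp_def sum_distrib_left sum.reindex[OF inj] o_def
  proof (rule sum.cong)
    fix W assume W: "W \<in> Pow U"
    then have "x \<notin> W" "finite W" using assms finite_subset[of W U] by auto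
    then have "insert x U - insert x W = U - W" "card (insert x W) = Suc (card W)"
      using W assms(2) by auto
    then show "w (insert x W) = p * (p ^ card W * (1 - p) ^ card (U - W) * F (insert x W))"
      by (simp add: w_def)
  qed simp
  finally show ?thesis by simp
qed

lemma expect_Vp_cong: "(\<And>W. W \<subseteq> V \<Longrightarrow> F W = G W) \<Longrightarrow> expect_Vp p V F = expect_Vp p V G"
  unfolding expect_Vp_def by (rule sum.cong) auto

lemma expect_Vp_const [simp]: "finite V \<Longrightarrow> expect_Vp p V (\<lambda>_. c) = c"
  by (induction V rule: finite_induct) (simp_all add: expect_Vp_insert algebra_simps)

lemma expect_Vp_mono:
  assumes "0 \<le> p" "p \<le> 1" "\<And>W. W \<subseteq> V \<Longrightarrow> F W \<le> G W"
  shows "expect_Vp p V F \<le> expect_Vp p V G"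
  unfolding expect_Vp_def using assms by (intro sum_mono mult_left_mono) auto

lemma expect_Vp_nonneg:
  assumes "0 \<le> p" "p \<le> 1" "\<And>W. W \<subseteq> V \<Longrightarrow> 0 \<le> F W"
  shows "0 \<le> expect_Vp p V F"
  unfolding expect_Vp_def using assms by (intro sum_nonneg) auto

lemma expect_Vp_diff: "expect_Vp p V (\<lambda>W. F W - G W) = expect_Vp p V F - expect_Vp p V G"
  unfolding expect_Vp_def by (simp add: algebra_simps sum_subtractf)

lemma expect_Vp_cmult: "expect_Vp p V (\<lambda>W. c * F W) = c * expect_Vp p V F"
  unfolding expect_Vp_def by (simp add: sum_distrib_left mult_ac)

lemma expect_Vp_sum: "expect_Vp p V (\<lambda>W. \<Sum>i\<in>I. F i W) = (\<Sum>i\<in>I. expect_Vp p V (F i))"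
  unfolding expect_Vp_def by (simp add: sum_distrib_left sum.swap[of _ I])

lemma expect_Vp_indicator_subset:
  assumes "finite V" "A \<subseteq> V" "\<And>W. F W = F (W - A)"
  shows "expect_Vp p V (\<lambda>W. if A \<subseteq> W then F W else 0) = p ^ card A * expect_Vp p V F"
proof -
  have "finite A" using assms(1,2) by (rule finite_subset[rotated])
  then show ?thesis using assms
  proof (induction A arbitrary: V F rule: finite_induct)
    case empty then show ?case by simp
  next
    case (insert a A)
    define U where "U = V - {a}"
    have V: "V = insert a U" "a \<notin> U" "finite U" "A \<subseteq> U"
      using insert.prems insert.hyps unfolding U_def by auto
    have F_insert: "F (insert a W) = F W" for W
      using insert.prems(3)[of "insert a W"] insert.prems(3)[of W] by simp
    have F_minus: "F W = F (W - A)" for W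
    proof -
      have "W - A - insert a A = W - insert a A" by blast
      then show ?thesis using insert.prems(3)[of W] insert.prems(3)[of "W - A"] by simp
    qed
    have "expect_Vp p V F = p * expect_Vp p U F + (1 - p) * expect_Vp p U F"
      using V by (simp add: expect_Vp_insert F_insert)
    then have "expect_Vp p U F = expect_Vp p V F"
      by (simp add: algebra_simps)
    moreover have "expect_Vp p U (\<lambda>W. if insert a A \<subseteq> W then F W else 0) = 0"
      using V by (subst expect_Vp_cong[where G = "\<lambda>_. 0"]) auto
    moreover have "expect_Vp p U (\<lambda>W. if insert a A \<subseteq> insert a W then F (insert a W) else 0)
        = expect_Vp p U (\<lambda>W. if A \<subseteq> W then F W else 0)"
      using insert.hyps F_insert by (intro expect_Vp_cong) auto
    ultimately show ?case
      using V insert.hyps insert.IH[of U F] F_minus by (simp add: expect_Vp_insert)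
  qed
qed

lemma expect_Vp_subset_indicator:
  "finite V \<Longrightarrow> A \<subseteq> V \<Longrightarrow> expect_Vp p V (\<lambda>W. if A \<subseteq> W then 1 else 0) = p ^ card A"
  using expect_Vp_indicator_subset[of V A "\<lambda>_. 1" p] by simp

lemma harris_inequality:
  assumes "finite V" "0 \<le> p" "p \<le> 1" "antimono f" "antimono g"
  shows "expect_Vp p V f * expect_Vp p V g \<le> expect_Vp p V (\<lambda>W. f W * g W)"
  using assms(1,4,5)
proof (induction V arbitrary: f g rule: finite_induct)
  case empty then show ?case by simp
next
  case (insert x U)
  define f1 where "f1 = expect_Vp p U (\<lambda>W. f (insert x W))"
  define f0 where "f0 = expect_Vp p U f"
  define g1 where "g1 = expect_Vp p U (\<lambda>W. g (insert x W))"
  define g0 where "g0 = expect_Vp p U g"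
  have anti_insert: "antimono (\<lambda>W. h (insert x W))" if "antimono h" for h :: "'a set \<Rightarrow> real"
    using that by (auto intro!: antimonoI dest: antimonoD[OF _ insert_mono])
  have "f1 \<le> f0" "g1 \<le> g0" unfolding f1_def f0_def g1_def g0_def
    using insert.prems assms(2,3) by (auto intro!: expect_Vp_mono dest: antimonoD[OF _ subset_insertI])
  \<comment> \<open>splitting on \<open>x \<in> W\<close>, the covariance gained is \<open>p (1 - p) (f0 - f1) (g0 - g1) \<ge> 0\<close>\<close>
  then have "p * (1 - p) * ((f0 - f1) * (g0 - g1)) \<ge> 0"
    using assms(2,3) by simp
  then have "expect_Vp p (insert x U) f * expect_Vp p (insert x U) g
      \<le> p * (f1 * g1) + (1 - p) * (f0 * g0)"
    using insert.hyps by (simp add: expect_Vp_insert f1_def f0_def g1_def g0_def algebra_simps)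
  also have "\<dots> \<le> p * expect_Vp p U (\<lambda>W. f (insert x W) * g (insert x W))
                   + (1 - p) * expect_Vp p U (\<lambda>W. f W * g W)"
    unfolding f1_def f0_def g1_def g0_def
    using insert.IH insert.prems anti_insert assms(2,3) by (intro add_mono mult_left_mono) auto
  also have "\<dots> = expect_Vp p (insert x U) (\<lambda>W. f W * g W)"
    using insert.hyps by (simp add: expect_Vp_insert)
  finally show ?case .
qed

lemma expect_Vp_no_subset_ge:
  assumes "finite V" "finite I" "\<And>i. i \<in> I \<Longrightarrow> C i \<subseteq> V" "0 \<le> p" "p \<le> 1"
  shows "1 - (\<Sum>i\<in>I. p ^ card (C i))
           \<le> expect_Vp p V (\<lambda>W. if \<forall>i\<in>I. \<not> C i \<subseteq> W then 1 else 0)"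
proof -
  have "1 - (\<Sum>i\<in>I. p ^ card (C i))
      = expect_Vp p V (\<lambda>W. 1 - (\<Sum>i\<in>I. if C i \<subseteq> W then 1 else 0))"
    using assms(1,3) by (simp add: expect_Vp_diff expect_Vp_sum expect_Vp_subset_indicator)
  also have "\<dots> \<le> expect_Vp p V (\<lambda>W. if \<forall>i\<in>I. \<not> C i \<subseteq> W then 1 else 0)"
  proof (rule expect_Vp_mono[OF assms(4,5)])
    fix W
    show "1 - (\<Sum>i\<in>I. if C i \<subseteq> W then 1 else 0)
        \<le> (if \<forall>i\<in>I. \<not> C i \<subseteq> W then 1 else (0::real))"
    proof (cases "\<forall>i\<in>I. \<not> C i \<subseteq> W")
      case False
      then obtain j where "j \<in> I" "C j \<subseteq> W" by blast
      then have "1 \<le> (\<Sum>i\<in>I. if C i \<subseteq> W then 1 else (0::real))"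
        using assms(2) member_le_sum[of j I "\<lambda>i. if C i \<subseteq> W then 1 else 0::real"] by simp
      with False show ?thesis by simp
    qed (simp add: sum_nonneg)
  qed
  finally show ?thesis .
qed

lemma prob_random_subset_le_exp_moment:
  assumes "finite V" "0 \<le> p" "p \<le> 1" "0 \<le> t"
  shows "prob_random_subset V p (\<lambda>W. X W \<le> k) \<le> exp (t * k) * expect_Vp p V (\<lambda>W. exp (- t * X W))"
proof -
  have "prob_random_subset V p (\<lambda>W. X W \<le> k) = expect_Vp p V (\<lambda>W. if X W \<le> k then 1 else 0)"
    using assms(1) by (rule prob_random_subset_eq_expect_Vp)
  also have "\<dots> \<le> expect_Vp p V (\<lambda>W. exp (t * k) * exp (- t * X W))"
  proof (rule expect_Vp_mono[OF assms(2,3)])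
    fix W
    have "X W \<le> k \<Longrightarrow> 0 \<le> t * (k - X W)" using assms(4) by simp
    then show "(if X W \<le> k then 1 else 0) \<le> exp (t * k) * exp (- t * X W)"
      by (simp add: algebra_simps flip: exp_add)
  qed
  finally show ?thesis by (simp add: expect_Vp_cmult)
qed

lemma has_real_derivative_expect_Vp_exp:
  "((\<lambda>s. expect_Vp p V (\<lambda>W. exp (- s * X W))) has_real_derivative
      - expect_Vp p V (\<lambda>W. X W * exp (- s * X W))) (at s)"
proof -
  have deriv_eq: "- expect_Vp p V (\<lambda>W. X W * exp (- s * X W))
      = (\<Sum>W\<in>Pow V. p ^ card W * (1 - p) ^ card (V - W) * (exp (- s * X W) * - X W))"
    unfolding expect_Vp_def by (simp add: sum_negf[symmetric] mult_ac)
  show ?thesis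
    unfolding deriv_eq unfolding expect_Vp_def
    by (intro DERIV_sum DERIV_cmult) (auto intro!: derivative_eq_intros)
qed

lemma exp_bound_from_differential_inequality:
  fixes \<Psi> \<Psi>' :: "real \<Rightarrow> real"
  assumes "\<And>s. (\<Psi> has_real_derivative \<Psi>' s) (at s)"
    and "\<And>s. 0 \<le> s \<Longrightarrow> s \<le> t \<Longrightarrow> c * exp (- s) * \<Psi> s \<le> - \<Psi>' s"
    and "0 \<le> t"
  shows "\<Psi> t \<le> \<Psi> 0 * exp (- c * (1 - exp (- t)))"
proof -
  define h where "h s = \<Psi> s * exp (c * (1 - exp (- s)))" for s
  have "h t \<le> h 0"
  proof (rule DERIV_nonpos_imp_nonincreasing[OF assms(3)])
    fix s assume "0 \<le> s" "s \<le> t"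
    then have "\<Psi>' s + c * exp (- s) * \<Psi> s \<le> 0"
      using assms(2) by fastforce
    then have "(\<Psi>' s + c * exp (- s) * \<Psi> s) * exp (c * (1 - exp (- s))) \<le> 0"
      by (simp add: mult_nonpos_nonneg)
    moreover have "(h has_real_derivative (\<Psi>' s + c * exp (- s) * \<Psi> s) * exp (c * (1 - exp (- s)))) (at s)"
      unfolding h_def by (auto intro!: derivative_eq_intros assms(1) simp: algebra_simps)
    ultimately show "\<exists>y. (h has_real_derivative y) (at s) \<and> y \<le> 0" by blast
  qed
  then have "h t * exp (- c * (1 - exp (- t))) \<le> \<Psi> 0 * exp (- c * (1 - exp (- t)))"
    by (simp add: h_def)
  then show ?thesis by (simp add: h_def mult.assoc flip: exp_add)
qed

lemma finite_matching_sizes: "finite H \<Longrightarrow> finite {card M | M. is_matching H M}"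
  by (rule finite_subset[where B = "card ` Pow H"]) (auto simp: is_matching_def)

lemma matching_number_ge: "finite H \<Longrightarrow> is_matching H M \<Longrightarrow> card M \<le> matching_number H"
  unfolding matching_number_def by (rule Max_ge) (auto simp: finite_matching_sizes)

lemma matching_number_attained:
  assumes "finite H"
  shows "\<exists>M. is_matching H M \<and> card M = matching_number H"
proof -
  have "is_matching H {}" by (simp add: is_matching_def)
  then have "{card M | M. is_matching H M} \<noteq> {}" by blast
  with assms have "matching_number H \<in> {card M | M. is_matching H M}"
    unfolding matching_number_def by (rule Max_in[OF finite_matching_sizes])
  then show ?thesis by auto
qed

lemma matching_number_mono:
  assumes "finite H'" "H \<subseteq> H'"
  shows "matching_number H \<le> matching_number H'"
proof -
  obtain M where "is_matching H M" "card M = matching_number H"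
    using matching_number_attained assms finite_subset by blast
  then show ?thesis
    using assms matching_number_ge[of H' M] by (auto simp: is_matching_def)
qed

lemma matching_number_induced_mono:
  "finite H \<Longrightarrow> W \<subseteq> W' \<Longrightarrow> matching_number (induced H W) \<le> matching_number (induced H W')"
  by (rule matching_number_mono) (auto simp: induced_def)

definition neighbours :: "'a set set \<Rightarrow> 'a set \<Rightarrow> 'a set set" where
  "neighbours H A = {B \<in> H. B \<noteq> A \<and> B \<inter> A \<noteq> {}}"

definition edges_disjoint_from :: "'a set set \<Rightarrow> 'a set \<Rightarrow> 'a set set" where
  "edges_disjoint_from H A = {B \<in> H. B \<inter> A = {}}"

definition isolated_edge :: "'a set set \<Rightarrow> 'a set \<Rightarrow> 'a set \<Rightarrow> bool" where
  "isolated_edge H A W \<longleftrightarrow> A \<subseteq> W \<and> (\<forall>B \<in> neighbours H A. \<not> B \<subseteq> W)"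

lemma induced_edges_disjoint_from_Diff:
  "induced (edges_disjoint_from H A) (W - A) = induced (edges_disjoint_from H A) W"
  by (auto simp: induced_def edges_disjoint_from_def)

lemma matching_number_edges_disjoint_from_le:
  "finite H \<Longrightarrow> matching_number (induced (edges_disjoint_from H A) W) \<le> matching_number (induced H W)"
  by (rule matching_number_mono) (auto simp: induced_def edges_disjoint_from_def)

lemma card_isolated_edges_le_matching_number:
  assumes "finite H"
  shows "card {A \<in> H. isolated_edge H A W} \<le> matching_number (induced H W)"
proof (rule matching_number_ge)
  show "finite (induced H W)" using assms by (simp add: induced_def)
  show "is_matching (induced H W) {A \<in> H. isolated_edge H A W}"
    unfolding is_matching_def
  proof (intro conjI ballI impI subsetI)
    fix A assume "A \<in> {A \<in> H. isolated_edge H A W}"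
    then show "A \<in> induced H W" by (simp add: induced_def isolated_edge_def)
  next
    fix A B assume "A \<in> {A \<in> H. isolated_edge H A W}" "B \<in> {A \<in> H. isolated_edge H A W}" "A \<noteq> B"
    then show "A \<inter> B = {}" by (auto simp: isolated_edge_def neighbours_def)
  qed
qed

lemma is_matching_edges_disjoint_from:
  assumes M: "is_matching (induced H W) M" and iso: "isolated_edge H A W"
  shows "is_matching (induced (edges_disjoint_from H A) W) (M - {A})"
  unfolding is_matching_def
proof (intro conjI ballI impI subsetI)
  fix B assume "B \<in> M - {A}"
  then have B: "B \<in> H" "B \<subseteq> W" "B \<noteq> A" using M by (auto simp: is_matching_def induced_def)
  then have "B \<notin> neighbours H A" using iso by (auto simp: isolated_edge_def)
  then show "B \<in> induced (edges_disjoint_from H A) W"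
    using B by (auto simp: neighbours_def induced_def edges_disjoint_from_def)
next
  fix B C assume "B \<in> M - {A}" "C \<in> M - {A}" "B \<noteq> C"
  then show "B \<inter> C = {}" using M by (auto simp: is_matching_def)
qed

lemma matching_number_le_Suc_edges_disjoint_from:
  assumes "finite H" "isolated_edge H A W"
  shows "matching_number (induced H W) \<le> Suc (matching_number (induced (edges_disjoint_from H A) W))"
proof -
  have "finite (induced H W)" using assms(1) by (simp add: induced_def)
  then obtain M where M: "is_matching (induced H W) M" "card M = matching_number (induced H W)"
    using matching_number_attained by blast
  have "card (M - {A}) \<le> matching_number (induced (edges_disjoint_from H A) W)"
    using assms is_matching_edges_disjoint_from[OF M(1) assms(2)]
    by (intro matching_number_ge) (auto simp: induced_def edges_disjoint_from_def)
  moreover have "card M \<le> Suc (card (M - {A}))"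
    by (cases "finite M") (auto simp: card_Diff_singleton_if)
  ultimately show ?thesis using M(2) by simp
qed

definition neighbour_weight :: "real \<Rightarrow> 'a set set \<Rightarrow> real" where
  "neighbour_weight p H = (\<Sum>A\<in>H. \<Sum>B\<in>neighbours H A. p ^ card (A \<union> B))"

lemma neighbour_pairs_with_doubleton:
  assumes "A \<in> H" "B \<in> H" "A \<noteq> B" "A \<inter> B \<noteq> {}"
  shows "{x \<in> Sigma H (neighbours H). (\<lambda>(C, D). {C, D}) x = {A, B}} = {(A, B), (B, A)}"
proof (intro equalityI subsetI)
  fix x assume "x \<in> {x \<in> Sigma H (neighbours H). (\<lambda>(C, D). {C, D}) x = {A, B}}"
  then obtain C D where "x = (C, D)" "{C, D} = {A, B}" by auto
  then show "x \<in> {(A, B), (B, A)}" by (auto simp: doubleton_eq_iff)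
next
  fix x assume "x \<in> {(A, B), (B, A)}"
  then show "x \<in> {x \<in> Sigma H (neighbours H). (\<lambda>(C, D). {C, D}) x = {A, B}}"
    using assms by (auto simp: neighbours_def Int_commute insert_commute)
qed

lemma neighbour_weight_eq_Delta_p:
  assumes "finite H"
  shows "neighbour_weight p H = 2 * Delta_p p H"
proof -
  define S where "S = Sigma H (neighbours H)"
  define T where "T = {P. P \<subseteq> H \<and> card P = 2 \<and> \<Inter>P \<noteq> {}}"
  define h where "h x = p ^ card (fst x \<union> snd x)" for x :: "'a set \<times> 'a set"
  have fin_neighbours: "finite (neighbours H A)" for A
    using assms by (simp add: neighbours_def)
  have "finite S" unfolding S_def using assms fin_neighbours by blast
  moreover have "finite T"
    unfolding T_def using assms by (simp add: finite_subset[of _ "Pow H"] subset_iff)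
  moreover have "(\<lambda>(A, B). {A, B}) ` S \<subseteq> T"
    unfolding S_def T_def neighbours_def by (auto simp: card_2_iff)
  ultimately have "sum h S = (\<Sum>P\<in>T. sum h {x \<in> S. (\<lambda>(A, B). {A, B}) x = P})"
    by (rule sum.group[symmetric])
  also have "\<dots> = (\<Sum>P\<in>T. 2 * p ^ card (\<Union>P))"
  proof (rule sum.cong[OF refl])
    fix P assume P: "P \<in> T"
    then have "card P = 2" unfolding T_def by blast
    then obtain A B where "P = {A, B}" "A \<noteq> B"
      unfolding card_2_iff by blast
    with P have AB: "P = {A, B}" "A \<noteq> B" "A \<in> H" "B \<in> H" "A \<inter> B \<noteq> {}"
      unfolding T_def by auto
    then have "{x \<in> S. (\<lambda>(A, B). {A, B}) x = P} = {(A, B), (B, A)}"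
      unfolding S_def AB(1) using AB(2-) by (intro neighbour_pairs_with_doubleton)
    then show "sum h {x \<in> S. (\<lambda>(A, B). {A, B}) x = P} = 2 * p ^ card (\<Union>P)"
      using AB unfolding h_def by (simp add: Un_commute)
  qed
  finally show ?thesis
    unfolding neighbour_weight_def Delta_p_def S_def T_def h_def
    using assms fin_neighbours by (simp add: sum.Sigma sum_distrib_left case_prod_beta)
qed

lemma expect_Vp_isolated_edge_ge:
  assumes V: "finite V" "H \<subseteq> Pow V" and p: "0 \<le> p" "p \<le> 1" and s: "0 \<le> s" and "A \<in> H"
  defines "\<nu> \<equiv> \<lambda>W. real (matching_number (induced H W))"
  shows "(p ^ card A - (\<Sum>B\<in>neighbours H A. p ^ card (A \<union> B))) * exp (- s)
           * expect_Vp p V (\<lambda>W. exp (- s * \<nu> W))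
         \<le> expect_Vp p V (\<lambda>W. (if isolated_edge H A W then 1 else 0) * exp (- s * \<nu> W))"
proof -
  \<comment> \<open>both \<open>f\<close> and \<open>g\<close> depend only on \<open>W - A\<close> and decrease as \<open>W\<close> grows\<close>
  define f where "f W = (if \<forall>B\<in>neighbours H A. \<not> B - A \<subseteq> W then 1 else 0::real)" for W
  define g where "g W = exp (- s * real (matching_number (induced (edges_disjoint_from H A) W)))" for W
  define \<Psi> where "\<Psi> = expect_Vp p V (\<lambda>W. exp (- s * \<nu> W))"
  have fin: "finite H" "finite (edges_disjoint_from H A)" "finite (neighbours H A)" "A \<subseteq> V"
    using assms finite_subset[of H "Pow V"]
    by (auto simp: edges_disjoint_from_def neighbours_def)
  have "p ^ card A - (\<Sum>B\<in>neighbours H A. p ^ card (A \<union> B))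
      = p ^ card A * (1 - (\<Sum>B\<in>neighbours H A. p ^ card (B - A)))"
  proof -
    have "card (A \<union> B) = card A + card (B - A)" if "B \<in> neighbours H A" for B
      using that fin(4) V finite_subset[of _ V]
      by (subst card_Un_disjoint[symmetric]) (auto simp: neighbours_def)
    then show ?thesis by (simp add: power_add right_diff_distrib sum_distrib_left)
  qed
  then have "(p ^ card A - (\<Sum>B\<in>neighbours H A. p ^ card (A \<union> B))) * exp (- s) * \<Psi>
      = exp (- s) * p ^ card A * ((1 - (\<Sum>B\<in>neighbours H A. p ^ card (B - A))) * \<Psi>)"
    by (simp add: mult_ac)
  also have "\<dots> \<le> exp (- s) * p ^ card A * (expect_Vp p V f * expect_Vp p V g)"
  proof (intro mult_left_mono mult_mono)
    show "1 - (\<Sum>B\<in>neighbours H A. p ^ card (B - A)) \<le> expect_Vp p V f"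
      unfolding f_def using V fin p by (intro expect_Vp_no_subset_ge) (auto simp: neighbours_def)
    show "\<Psi> \<le> expect_Vp p V g"
      unfolding \<Psi>_def g_def \<nu>_def using p s fin(1)
      by (intro expect_Vp_mono) (simp_all add: mult_left_mono matching_number_edges_disjoint_from_le)
    show "0 \<le> \<Psi>" "0 \<le> expect_Vp p V f"
      unfolding \<Psi>_def using p by (auto intro!: expect_Vp_nonneg simp: f_def)
  qed (use p in auto)
  also have "\<dots> \<le> exp (- s) * p ^ card A * expect_Vp p V (\<lambda>W. f W * g W)"
    using V(1) p s fin(2)
    by (intro mult_left_mono harris_inequality antimonoI)
       (auto simp: f_def g_def matching_number_induced_mono mult_left_mono)
  also have "\<dots> = expect_Vp p V (\<lambda>W. exp (- s) * (if A \<subseteq> W then f W * g W else 0))"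
  proof -
    have "g W = g (W - A)" for W
      unfolding g_def by (simp add: induced_edges_disjoint_from_Diff)
    then show ?thesis
      using V(1) fin(4) by (simp add: expect_Vp_cmult expect_Vp_indicator_subset f_def Diff_subset_conv)
  qed
  also have "\<dots> \<le> expect_Vp p V (\<lambda>W. (if isolated_edge H A W then 1 else 0) * exp (- s * \<nu> W))"
  proof (rule expect_Vp_mono[OF p])
    fix W
    show "exp (- s) * (if A \<subseteq> W then f W * g W else 0)
        \<le> (if isolated_edge H A W then 1 else 0) * exp (- s * \<nu> W)"
    proof (cases "isolated_edge H A W")
      case True
      then have "\<nu> W \<le> 1 + real (matching_number (induced (edges_disjoint_from H A) W))"
        unfolding \<nu>_def using matching_number_le_Suc_edges_disjoint_from[OF fin(1)] by force
      then have "s * \<nu> W \<le> s * (1 + real (matching_number (induced (edges_disjoint_from H A) W)))"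
        using s by (rule mult_left_mono)
      then have "exp (- s) * g W \<le> exp (- s * \<nu> W)"
        unfolding g_def by (simp add: algebra_simps flip: exp_add)
      then show ?thesis using True by (simp add: f_def)
    next
      case False
      then show ?thesis by (auto simp: f_def isolated_edge_def Diff_subset_conv sup_absorb2)
    qed
  qed
  finally show ?thesis unfolding \<Psi>_def .
qed

lemma expect_Vp_matching_number_exp_ge:
  assumes V: "finite V" "H \<subseteq> Pow V" and p: "0 \<le> p" "p \<le> 1" and s: "0 \<le> s"
  defines "\<nu> \<equiv> \<lambda>W. real (matching_number (induced H W))"
  shows "(mu_p p H - neighbour_weight p H) * exp (- s) * expect_Vp p V (\<lambda>W. exp (- s * \<nu> W))
      \<le> expect_Vp p V (\<lambda>W. \<nu> W * exp (- s * \<nu> W))"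
proof -
  have fin: "finite H" using V finite_subset by blast
  have "(mu_p p H - neighbour_weight p H) * exp (- s) * expect_Vp p V (\<lambda>W. exp (- s * \<nu> W))
     = (\<Sum>A\<in>H. (p ^ card A - (\<Sum>B\<in>neighbours H A. p ^ card (A \<union> B))) * exp (- s)
                 * expect_Vp p V (\<lambda>W. exp (- s * \<nu> W)))"
    unfolding mu_p_def neighbour_weight_def by (simp only: sum_subtractf[symmetric] sum_distrib_right)
  also have "\<dots> \<le> (\<Sum>A\<in>H. expect_Vp p V (\<lambda>W. (if isolated_edge H A W then 1 else 0) * exp (- s * \<nu> W)))"
    unfolding \<nu>_def using V p s by (intro sum_mono expect_Vp_isolated_edge_ge)
  also have "\<dots> = expect_Vp p V (\<lambda>W. real (card {A \<in> H. isolated_edge H A W}) * exp (- s * \<nu> W))"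
    using fin
    by (simp add: expect_Vp_sum[symmetric] sum_distrib_right[symmetric] sum.inter_filter[symmetric])
  also have "\<dots> \<le> expect_Vp p V (\<lambda>W. \<nu> W * exp (- s * \<nu> W))"
    unfolding \<nu>_def using p fin
    by (intro expect_Vp_mono mult_right_mono) (simp_all add: card_isolated_edges_le_matching_number)
  finally show ?thesis .
qed

lemma expect_Vp_exp_neg_matching_number_le:
  assumes V: "finite V" "H \<subseteq> Pow V" and p: "0 \<le> p" "p \<le> 1" and t: "0 \<le> t"
  shows "expect_Vp p V (\<lambda>W. exp (- t * real (matching_number (induced H W))))
           \<le> exp (- (mu_p p H - 2 * Delta_p p H) * (1 - exp (- t)))"
proof -
  define \<nu> where "\<nu> W = real (matching_number (induced H W))" for W
  have "expect_Vp p V (\<lambda>W. exp (- t * \<nu> W))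
      \<le> expect_Vp p V (\<lambda>W. exp (- 0 * \<nu> W)) * exp (- (mu_p p H - neighbour_weight p H) * (1 - exp (- t)))"
  proof (rule exp_bound_from_differential_inequality[OF has_real_derivative_expect_Vp_exp _ t])
    fix s :: real assume "0 \<le> s"
    then show "(mu_p p H - neighbour_weight p H) * exp (- s) * expect_Vp p V (\<lambda>W. exp (- s * \<nu> W))
        \<le> - (- expect_Vp p V (\<lambda>W. \<nu> W * exp (- s * \<nu> W)))"
      unfolding \<nu>_def using expect_Vp_matching_number_exp_ge[OF V p] by simp
  qed
  moreover have "neighbour_weight p H = 2 * Delta_p p H"
    using V finite_subset by (blast intro: neighbour_weight_eq_Delta_p)
  ultimately show ?thesis using V(1) unfolding \<nu>_def by simp
qed

lemma gamma_neg_ln_bound: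
  fixes \<gamma> :: real
  assumes "0 < \<gamma>" "\<gamma> \<le> 1/10"
  shows "2 * \<gamma> * - ln \<gamma> \<le> 1 - \<gamma>"
proof -
  \<comment> \<open>\<open>\<gamma> ln (1/\<gamma>) \<le> 1/e\<close>, and \<open>e \<ge> 9/4\<close>\<close>
  have "3/2 \<le> exp (1/2::real)"
    using exp_ge_add_one_self[of "1/2::real"] by simp
  then have "(3/2)\<^sup>2 \<le> (exp (1/2::real))\<^sup>2"
    by (rule power_mono) simp
  then have "9/4 \<le> exp (1::real)"
    by (simp add: power2_eq_square flip: exp_add)
  have "- ln \<gamma> - 1 = ln (1 / (\<gamma> * exp 1))"
    using assms by (simp add: ln_div ln_mult)
  also have "\<dots> \<le> 1 / (\<gamma> * exp 1) - 1"
    using assms by (intro ln_le_minus_one) simp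
  finally have "\<gamma> * - ln \<gamma> \<le> 1 / exp 1"
    using assms by (simp add: field_simps)
  also have "\<dots> \<le> 4/9"
    using \<open>9/4 \<le> exp 1\<close> by (simp add: field_simps)
  finally show ?thesis using assms by linarith
qed

lemma mu_p_nonneg: "0 \<le> p \<Longrightarrow> 0 \<le> mu_p p H"
  unfolding mu_p_def by (simp add: sum_nonneg)

lemma Delta_p_nonneg: "0 \<le> p \<Longrightarrow> 0 \<le> Delta_p p H"
  unfolding Delta_p_def by (simp add: sum_nonneg)

lemma chernoff_exponent_le:
  fixes \<gamma> \<mu> \<Delta> :: real
  assumes "0 < \<gamma>" "\<gamma> \<le> 1/10" "0 \<le> \<mu>" "0 \<le> \<Delta>"
  shows "- 2 * ln \<gamma> * (\<gamma>\<^sup>2 * \<mu>) - (\<mu> - 2 * \<Delta>) * (1 - \<gamma>\<^sup>2) \<le> - (1 - \<gamma>) * \<mu> + 2 * \<Delta>"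
proof -
  have "\<gamma> * \<mu> * (2 * \<gamma> * - ln \<gamma>) \<le> \<gamma> * \<mu> * (1 - \<gamma>)"
    using assms gamma_neg_ln_bound by (intro mult_left_mono) auto
  moreover have "0 \<le> 2 * \<Delta> * \<gamma>\<^sup>2" using assms by simp
  ultimately show ?thesis by (simp add: algebra_simps power2_eq_square)
qed

theorem mainTheorem3:
  fixes V :: "'a set" and H :: "'a set set" and p \<gamma> :: real
  assumes "hypergraph_on V H"
    and "0 \<le> p" and "p \<le> 1"
    and "0 < \<gamma>" and "\<gamma> \<le> 1/10"
  shows "prob_random_subset V p
           (\<lambda>W. real (matching_number (induced H W)) \<le> \<gamma>^2 * mu_p p H)
         \<le> exp (- (1 - \<gamma>) * mu_p p H + 2 * Delta_p p H)"
proof -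
  have V: "finite V" "H \<subseteq> Pow V" using assms(1) by (auto simp: hypergraph_on_def)
  define t where "t = - 2 * ln \<gamma>"
  have "exp (- t) = exp (ln \<gamma>) * exp (ln \<gamma>)" by (simp add: t_def flip: exp_add)
  with assms(4,5) have t: "0 \<le> t" "exp (- t) = \<gamma>\<^sup>2"
    by (simp_all add: t_def power2_eq_square)
  have "prob_random_subset V p (\<lambda>W. real (matching_number (induced H W)) \<le> \<gamma>^2 * mu_p p H)
      \<le> exp (t * (\<gamma>^2 * mu_p p H))
          * expect_Vp p V (\<lambda>W. exp (- t * real (matching_number (induced H W))))"
    using V(1) assms(2,3) t(1) by (rule prob_random_subset_le_exp_moment)
  also have "\<dots> \<le> exp (t * (\<gamma>^2 * mu_p p H)) * exp (- (mu_p p H - 2 * Delta_p p H) * (1 - \<gamma>\<^sup>2))"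
    using expect_Vp_exp_neg_matching_number_le[OF V assms(2,3) t(1)] by (simp add: t(2))
  also have "\<dots> \<le> exp (- (1 - \<gamma>) * mu_p p H + 2 * Delta_p p H)"
    using chernoff_exponent_le[OF assms(4,5) mu_p_nonneg[OF assms(2)] Delta_p_nonneg[OF assms(2)]]
    by (simp add: t_def algebra_simps flip: exp_add)
  finally show ?thesis .
qed

end
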